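(* Let $G$ be a graph with maximum degree $\Delta \ge 24$. Then $$\chi_a(G) < \min\left\{\frac32\Delta^{\frac43} + 5\Delta - 14,\ \ \frac32\Delta^{\frac43} + \Delta + \frac{8\Delta^{\frac43}}{\Delta^{\frac23}-4} + 1\right\}.$$
   Context: An acyclic coloring of a graph is a proper vertex-coloring in which no cycle is bicolored (equivalently, the subgraph induced by any two color classes is a forest). $\chi_a(G)$, the acyclic chromatic number, is the minimum number of colors in an acyclic coloring of $G$. *)

theory Defs
  imports Complex_Main
begin

definition simple_graph :: "'a set \<Rightarrow> ('a \<Rightarrow> 'a \<Rightarrow> bool) \<Rightarrow> bool" where
  "simple_graph V E \<longleftrightarrow> finite V \<and> (\<forall>u v. E u v \<longrightarrow> u \<in> V \<and> v \<in> V)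
     \<and> (\<forall>u v. E u v \<longrightarrow> E v u) \<and> (\<forall>v. \<not> E v v)"

definition degree :: "'a set \<Rightarrow> ('a \<Rightarrow> 'a \<Rightarrow> bool) \<Rightarrow> 'a \<Rightarrow> nat" where
  "degree V E v = card {u \<in> V. E v u}"

definition max_degree :: "'a set \<Rightarrow> ('a \<Rightarrow> 'a \<Rightarrow> bool) \<Rightarrow> nat" where
  "max_degree V E = Max (degree V E ` V)"

definition is_cycle :: "'a set \<Rightarrow> ('a \<Rightarrow> 'a \<Rightarrow> bool) \<Rightarrow> 'a list \<Rightarrow> bool" where
  "is_cycle V E cs \<longleftrightarrow> length cs \<ge> 3 \<and> distinct cs \<and> set cs \<subseteq> V
     \<and> (\<forall>i < length cs - 1. E (cs ! i) (cs ! Suc i)) \<and> E (last cs) (hd cs)"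

definition proper_coloring :: "'a set \<Rightarrow> ('a \<Rightarrow> 'a \<Rightarrow> bool) \<Rightarrow> ('a \<Rightarrow> nat) \<Rightarrow> bool" where
  "proper_coloring V E c \<longleftrightarrow> (\<forall>u\<in>V. \<forall>v\<in>V. E u v \<longrightarrow> c u \<noteq> c v)"

definition acyclic_coloring :: "'a set \<Rightarrow> ('a \<Rightarrow> 'a \<Rightarrow> bool) \<Rightarrow> nat \<Rightarrow> ('a \<Rightarrow> nat) \<Rightarrow> bool" where
  "acyclic_coloring V E k c \<longleftrightarrow> (\<forall>v\<in>V. c v < k) \<and> proper_coloring V E c
     \<and> (\<forall>cs a b. is_cycle V E cs \<longrightarrow> \<not> (c ` set cs \<subseteq> {a, b}))"

definition acyclic_chromatic_number :: "'a set \<Rightarrow> ('a \<Rightarrow> 'a \<Rightarrow> bool) \<Rightarrow> nat" where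
  "acyclic_chromatic_number V E = (LEAST k. \<exists>c. acyclic_coloring V E k c)"

end

theory Submission
  imports Defs "HOL-Library.FuncSet"
begin

text \<open>
  A counting argument in the style of Rosenfeld. Let s = \<Delta>^(2/3) + 2, \<beta> = s(s - 1)/2, and let
  C(S) be the set of colourings of S \<subseteq> V with L colours that are proper, have no bicoloured
  cycle, and give distinct colours to any two vertices with at least s common neighbours.
  By induction on |S| one proves |C(S)| \<ge> \<beta>^|T| |C(S - T)| for all T \<subseteq> S.

  In the step from S to S \<union> {v}, at most \<Delta> colours appear on neighbours of v, and the
  vertices w of codegree at least s with v forbid at most \<Sigma> codeg(v,w)/s colours. Every
  other colour that fails closes a bicoloured cycle through v. On a 4-cycle v x w y the
  colouring of S agrees on x and y; on a longer cycle of length 2j + 6 it repeats colours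
  on 2j + 3 vertices, so by induction there are at most |C(S)|/\<beta> resp. |C(S)|/\<beta>^(2j+3)
  such colourings. There are (codeg(v,w) choose 2) \<le> \<beta> codeg(v,w)/s pairs {x, y} for each
  w of small codegree, and at most s \<Delta>^(2j+4) long cycles; since \<Sigma> codeg(v,w) \<le> \<Delta>^2,
  the choice L \<ge> \<beta> + \<Delta> + \<Delta>^2/s + s\<Delta>^4/(\<beta>(\<beta>^2 - \<Delta>^2)) leaves at least \<beta> |C(S)| extensions.
  Hence C(V) is nonempty, and for \<Delta> \<ge> 24 this L is below both bounds of the theorem.
\<close>

section \<open>Bicoloured cycles\<close>

lemma successively_iff_nth:
  "successively P xs \<longleftrightarrow> (\<forall>i. Suc i < length xs \<longrightarrow> P (xs ! i) (xs ! Suc i))"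
  by (induction P xs rule: successively.induct) (auto simp: nth_Cons split: nat.split)

lemma proper_coloring_fun_upd:
  assumes "proper_coloring S R \<phi>" and "symp R" and "\<not> R v v" and "v \<notin> S"
    and "\<And>y. y \<in> S \<Longrightarrow> R v y \<Longrightarrow> \<phi> y \<noteq> c"
  shows "proper_coloring (insert v S) R (\<phi>(v := c))"
  using assms unfolding proper_coloring_def by (metis fun_upd_apply insertE sympD)

lemma two_valued_alternating:
  assumes "\<And>j. f (Suc j) \<noteq> f j" and "\<And>j. f j \<in> {a, b}"
  shows "f j = f (j mod 2)"
proof (induction j rule: less_induct)
  case (less j)
  show ?case
  proof (cases "j < 2")
    case False
    then obtain i where j: "j = Suc (Suc i)" by (metis add_2_eq_Suc le_add_diff_inverse not_less)
    have "f (Suc (Suc i)) = f i"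
      using assms(1)[of i] assms(1)[of "Suc i"] assms(2)[of i] assms(2)[of "Suc i"] assms(2)[of j]
      unfolding j by blast
    then show ?thesis using less.IH[of i] j by simp
  qed simp
qed

lemma is_cycle_adj_mod:
  assumes "is_cycle W E cs"
  shows "E (cs ! (i mod length cs)) (cs ! (Suc i mod length cs))"
proof -
  define n where "n = length cs"
  from assms have n3: "3 \<le> n" and chain: "\<forall>i < n - 1. E (cs ! i) (cs ! Suc i)"
    and close: "E (last cs) (hd cs)"
    by (auto simp: is_cycle_def n_def)
  have "E (cs ! m) (cs ! (Suc m mod n))" if "m < n" for m
  proof (cases "m = n - 1")
    case True
    with n3 close show ?thesis
      by (simp add: n_def last_conv_nth hd_conv_nth flip: length_greater_0_conv)
  qed (use that chain in simp)
  moreover have "i mod n < n" using n3 by simp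
  ultimately have "E (cs ! (i mod n)) (cs ! (Suc (i mod n) mod n))" by blast
  then show ?thesis by (simp add: n_def mod_Suc_eq)
qed

lemma bicoloured_cycle_alternating_path:
  assumes cycle: "is_cycle W E cs" and v: "v \<in> set cs"
    and proper: "proper_coloring W E \<psi>" and bicoloured: "\<psi> ` set cs \<subseteq> {a, b}"
  obtains p where "length p + 1 = length cs" "odd (length p)" "distinct p" "v \<notin> set p"
    "set p \<subseteq> W" "successively E (v # p @ [v])"
    "\<forall>i<length p. \<psi> (p ! i) = \<psi> (p ! (i mod 2))" "\<psi> v = \<psi> (p ! 1)"
proof -
  define n where "n = length cs"
  from cycle have n3: "3 \<le> n" and dist: "distinct cs" and sub: "set cs \<subseteq> W"
    by (auto simp: is_cycle_def n_def)
  obtain k where k: "k < n" "cs ! k = v" using v by (auto simp: in_set_conv_nth n_def)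
  define q where "q j = cs ! ((k + j) mod n)" for j
  have q0: "q 0 = v" and qn: "q n = v" using k by (simp_all add: q_def)
  have q_in: "q j \<in> set cs" for j using n3 unfolding q_def n_def by (intro nth_mem mod_less_divisor) auto
  have q_adj: "E (q j) (q (Suc j))" for j
    using is_cycle_adj_mod[OF cycle, of "k + j"] by (simp add: q_def n_def)
  have q_inj: "i = j" if "q i = q j" "i < n" "j < n" for i j
    using that dist by (simp add: q_def nth_rotate[symmetric] nth_eq_iff_index_eq n_def)
  have step: "\<psi> (q (Suc j)) \<noteq> \<psi> (q j)" for j
    using proper q_adj q_in sub unfolding proper_coloring_def by (metis subsetD)
  have alt: "\<psi> (q j) = \<psi> (q (j mod 2))" for j
    by (rule two_valued_alternating[where f = "\<lambda>j. \<psi> (q j)" and a = a and b = b])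
      (use step q_in bicoloured in auto)
  have "even n"
  proof (rule ccontr)
    assume "odd n"
    then have "\<psi> (q n) = \<psi> (q 1)" using alt[of n] by (simp add: odd_iff_mod_2_eq_one)
    with step[of 0] q0 qn show False by simp
  qed
  define p where "p = map q [1..<n]"
  have p_nth: "p ! i = q (Suc i)" if "i < n - 1" for i using that by (simp add: p_def)
  have "length p + 1 = length cs" "odd (length p)" using n3 \<open>even n\<close> by (auto simp: p_def n_def)
  moreover have "distinct p" unfolding p_def distinct_map
    by (auto simp: inj_on_def intro: q_inj)
  moreover have "v \<notin> set p" using q_inj[of 0] q0 n3 by (fastforce simp: p_def)
  moreover have "set p \<subseteq> W" using q_in sub by (auto simp: p_def)
  moreover have "successively E (v # p @ [v])"
  proof -
    have "[0..<Suc n] = 0 # [1..<n] @ [n]" using n3 by (simp add: upt_conv_Cons)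
    then have "v # p @ [v] = map q [0..<Suc n]" using q0 qn by (simp add: p_def)
    moreover have "successively E (map q [0..<Suc n])"
      using q_adj by (simp add: successively_iff_nth del: upt_Suc)
    ultimately show ?thesis by (simp only:)
  qed
  moreover have "\<psi> (p ! i) = \<psi> (p ! (i mod 2))" if "i < length p" for i
  proof -
    have "i mod 2 < n - 1" using n3 by linarith
    then show ?thesis using that p_nth alt[of "Suc i"] alt[of "Suc (i mod 2)"]
      by (simp add: p_def mod_Suc_eq)
  qed
  moreover have "\<psi> v = \<psi> (p ! 1)" using p_nth[of 1] n3 alt[of 2] q0 by (simp add: numeral_2_eq_2)
  ultimately show ?thesis using that by blast
qed

section \<open>Counting good partial colourings\<close>

lemma real_card_UN_le:
  "finite I \<Longrightarrow> real (card (\<Union>i\<in>I. A i)) \<le> (\<Sum>i\<in>I. real (card (A i)))"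
  by (metis card_UN_le of_nat_mono of_nat_sum)

lemma real_choose_two: "real (k choose 2) * 2 = real k * (real k - 1)"
proof (cases k)
  case (Suc m)
  have "even (k * (k - 1))" by auto
  then have "real (k * (k - 1) div 2) = real (k * (k - 1)) / 2" by (subst real_of_nat_div) auto
  then show ?thesis using Suc by (simp add: choose_two of_nat_diff algebra_simps)
qed simp

lemma geometric_sum_le: "0 \<le> (x::real) \<Longrightarrow> x < 1 \<Longrightarrow> (\<Sum>i<n. x ^ i) \<le> 1 / (1 - x)"
  by (simp add: sum_gp_strict divide_right_mono)

locale acyclic_counting =
  fixes V :: "'a set" and E :: "'a \<Rightarrow> 'a \<Rightarrow> bool" and d L :: nat and s \<beta> :: real
  assumes graph: "simple_graph V E"
    and degree_le: "\<And>v. v \<in> V \<Longrightarrow> card {u \<in> V. E v u} \<le> d"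
    and s_gt_1: "1 < s"
    and \<beta>_eq: "\<beta> = s * (s - 1) / 2"
    and d_less_\<beta>: "real d < \<beta>"
    and L_ge: "\<beta> + real d + (real d)\<^sup>2 / s + s * (real d) ^ 4 / (\<beta> * (\<beta>\<^sup>2 - (real d)\<^sup>2)) \<le> real L"
begin

definition nbhd :: "'a \<Rightarrow> 'a set" where
  "nbhd v = {u \<in> V. E v u}"

definition codeg :: "'a \<Rightarrow> 'a \<Rightarrow> nat" where
  "codeg u w = card (nbhd u \<inter> nbhd w)"

definition heavy :: "'a \<Rightarrow> 'a \<Rightarrow> bool" where
  "heavy u w \<longleftrightarrow> u \<noteq> w \<and> s \<le> real (codeg u w)"

definition good :: "'a set \<Rightarrow> ('a \<Rightarrow> nat) \<Rightarrow> bool" where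
  "good S \<phi> \<longleftrightarrow> proper_coloring S E \<phi> \<and> proper_coloring S heavy \<phi>
     \<and> (\<forall>cs a b. is_cycle S E cs \<longrightarrow> \<not> \<phi> ` set cs \<subseteq> {a, b})"

definition colourings :: "'a set \<Rightarrow> ('a \<Rightarrow> nat) set" where
  "colourings S = {\<phi> \<in> S \<rightarrow>\<^sub>E {..<L}. good S \<phi>}"

lemma finite_V: "finite V"
  using graph by (simp add: simple_graph_def)

lemma E_sym: "E x y \<Longrightarrow> E y x"
  using graph by (simp add: simple_graph_def)

lemma E_in_V: "E x y \<Longrightarrow> x \<in> V \<and> y \<in> V"
  using graph by (simp add: simple_graph_def)

lemma E_irrefl: "\<not> E x x"
  using graph by (simp add: simple_graph_def)

lemma \<beta>_pos: "0 < \<beta>"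
  using d_less_\<beta> by linarith

lemma finite_nbhd: "finite (nbhd v)"
  using finite_V by (simp add: nbhd_def)

lemma card_nbhd_le: "card (nbhd v) \<le> d"
proof (cases "v \<in> V")
  case False
  then have "nbhd v = {}" using E_in_V by (auto simp: nbhd_def)
  then show ?thesis by simp
qed (simp add: nbhd_def degree_le)

lemma codeg_commute: "codeg u w = codeg w u"
  by (simp add: codeg_def Int_commute)

lemma heavy_sym: "symp heavy"
  by (auto simp: symp_def heavy_def codeg_commute)

lemma finite_colourings: "finite S \<Longrightarrow> finite (colourings S)"
  unfolding colourings_def by (rule finite_subset[OF _ finite_PiE[of S "\<lambda>_. {..<L}"]]) auto

lemma colourings_empty: "colourings {} = {\<lambda>_. undefined}"
  by (auto simp: colourings_def good_def proper_coloring_def is_cycle_def)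

lemma good_subset: "good S \<phi> \<Longrightarrow> S' \<subseteq> S \<Longrightarrow> good S' \<phi>"
  unfolding good_def proper_coloring_def is_cycle_def by blast

lemma good_cong: "good S \<phi> \<Longrightarrow> (\<And>x. x \<in> S \<Longrightarrow> \<psi> x = \<phi> x) \<Longrightarrow> good S \<psi>"
  unfolding good_def proper_coloring_def is_cycle_def
  by (smt (verit, ccfv_threshold) image_cong subsetD)

lemma restrict_colourings: "\<phi> \<in> colourings S \<Longrightarrow> S' \<subseteq> S \<Longrightarrow> restrict \<phi> S' \<in> colourings S'"
  unfolding colourings_def by (auto intro: good_cong good_subset)

lemma card_twinned_le:
  assumes X: "X \<subseteq> colourings S" and T: "T \<subseteq> S" and S: "finite S"
    and twin: "\<And>x. x \<in> T \<Longrightarrow> \<exists>y \<in> S - T. \<forall>\<phi> \<in> X. \<phi> x = \<phi> y"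
  shows "card X \<le> card (colourings (S - T))"
proof -
  have "inj_on (\<lambda>\<phi>. restrict \<phi> (S - T)) X"
  proof (rule inj_onI)
    fix \<phi>1 \<phi>2 assume \<phi>: "\<phi>1 \<in> X" "\<phi>2 \<in> X" and eq: "restrict \<phi>1 (S - T) = restrict \<phi>2 (S - T)"
    have agree: "\<phi>1 x = \<phi>2 x" if "x \<in> S - T" for x
      using eq that by (metis restrict_apply')
    show "\<phi>1 = \<phi>2"
    proof (rule extensionalityI)
      show "\<phi>1 \<in> extensional S" "\<phi>2 \<in> extensional S"
        using \<phi> X by (auto simp: colourings_def PiE_def)
      show "\<phi>1 x = \<phi>2 x" if "x \<in> S" for x
      proof (cases "x \<in> T")
        case True
        with twin obtain y where "y \<in> S - T" "\<forall>\<phi> \<in> X. \<phi> x = \<phi> y" by blast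
        with \<phi> agree show ?thesis by metis
      qed (use that agree in simp)
    qed
  qed
  moreover have "(\<lambda>\<phi>. restrict \<phi> (S - T)) ` X \<subseteq> colourings (S - T)"
    using X restrict_colourings by blast
  ultimately show ?thesis
    using S finite_colourings by (meson card_inj_on_le finite_Diff)
qed

definition deletion_bound :: "'a set \<Rightarrow> bool" where
  "deletion_bound S \<longleftrightarrow>
     (\<forall>T \<subseteq> S. \<beta> ^ card T * real (card (colourings (S - T))) \<le> real (card (colourings S)))"

lemma card_twinned_le_deletion:
  assumes "deletion_bound S" "X \<subseteq> colourings S" "T \<subseteq> S" "finite S"
    and "\<And>x. x \<in> T \<Longrightarrow> \<exists>y \<in> S - T. \<forall>\<phi> \<in> X. \<phi> x = \<phi> y"
  shows "real (card X) * \<beta> ^ card T \<le> real (card (colourings S))"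
proof -
  have "real (card X) * \<beta> ^ card T \<le> real (card (colourings (S - T))) * \<beta> ^ card T"
    using card_twinned_le[OF assms(2-5)] \<beta>_pos by (intro mult_right_mono) auto
  also have "\<dots> \<le> real (card (colourings S))"
    using assms(1,3) by (simp add: deletion_bound_def mult.commute)
  finally show ?thesis .
qed

lemma card_colourings_equal_pair:
  assumes "deletion_bound S" "finite S" "x \<in> S" "y \<in> S" "x \<noteq> y"
  shows "real (card {\<phi> \<in> colourings S. \<phi> x = \<phi> y}) * \<beta> \<le> real (card (colourings S))"
proof -
  have "real (card {\<phi> \<in> colourings S. \<phi> x = \<phi> y}) * \<beta> ^ card {x} \<le> real (card (colourings S))"
    by (rule card_twinned_le_deletion) (use assms in auto)
  then show ?thesis by simp
qed

definition alternating_colourings :: "'a set \<Rightarrow> 'a list \<Rightarrow> ('a \<Rightarrow> nat) set" where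
  "alternating_colourings S p = {\<phi> \<in> colourings S. \<forall>i<length p. \<phi> (p ! i) = \<phi> (p ! (i mod 2))}"

lemma card_alternating_colourings:
  assumes "deletion_bound S" "finite S" "set p \<subseteq> S" "distinct p"
  shows "real (card (alternating_colourings S p)) * \<beta> ^ (length p - 2) \<le> real (card (colourings S))"
proof -
  let ?X = "alternating_colourings S p"
  define T where "T = nth p ` {2..<length p}"
  have "card T = length p - 2"
    using assms(4) by (simp add: T_def card_image inj_on_nth)
  moreover have "real (card ?X) * \<beta> ^ card T \<le> real (card (colourings S))"
  proof (rule card_twinned_le_deletion[OF assms(1) _ _ assms(2)])
    show "?X \<subseteq> colourings S" by (auto simp: alternating_colourings_def)
    show "T \<subseteq> S" using assms(3) by (auto simp: T_def)
    show "\<exists>y \<in> S - T. \<forall>\<phi> \<in> ?X. \<phi> x = \<phi> y" if "x \<in> T" for x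
    proof -
      obtain i where i: "2 \<le> i" "i < length p" "x = p ! i" using \<open>x \<in> T\<close> by (auto simp: T_def)
      have "p ! (i mod 2) \<notin> T"
        using assms(4) i by (auto simp: T_def nth_eq_iff_index_eq)
      moreover have "p ! (i mod 2) \<in> S" using assms(3) i by (auto intro: nth_mem)
      moreover have "\<phi> x = \<phi> (p ! (i mod 2))" if "\<phi> \<in> ?X" for \<phi>
        using that i(2,3) unfolding alternating_colourings_def by blast
      ultimately show ?thesis by blast
    qed
  qed
  ultimately show ?thesis by simp
qed

definition walks :: "'a \<Rightarrow> nat \<Rightarrow> 'a list set" where
  "walks v n = {q. length q = n \<and> successively E (v # q)}"

lemma walks_Suc:
  "walks v (Suc n) = (\<lambda>(q, y). q @ [y]) ` Sigma (walks v n) (\<lambda>q. nbhd (last (v # q)))"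
proof -
  have "q @ [y] \<in> walks v (Suc n) \<longleftrightarrow> q \<in> walks v n \<and> y \<in> nbhd (last (v # q))" for q y
  proof -
    have "successively E (v # q @ [y]) \<longleftrightarrow> successively E (v # q) \<and> E (last (v # q)) y"
      using successively_append_iff[of E "v # q" "[y]"] by simp
    then show ?thesis using E_in_V by (auto simp: walks_def nbhd_def)
  qed
  moreover have "p \<in> walks v (Suc n) \<Longrightarrow> \<exists>q y. p = q @ [y]" for p
    by (auto simp: walks_def length_Suc_conv_rev)
  ultimately show ?thesis by fastforce
qed

lemma finite_walks_card_le: "finite (walks v n) \<and> card (walks v n) \<le> d ^ n"
proof (induction n)
  case 0
  have "walks v 0 = {[]}" by (auto simp: walks_def)
  then show ?case by simp
next
  case (Suc n)
  let ?A = "Sigma (walks v n) (\<lambda>q. nbhd (last (v # q)))"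
  have "finite ?A" using Suc finite_nbhd by auto
  have "card ?A = (\<Sum>q \<in> walks v n. card (nbhd (last (v # q))))"
    using Suc finite_nbhd by (simp add: card_SigmaI)
  also have "\<dots> \<le> card (walks v n) * d"
    using sum_mono[of "walks v n" _ "\<lambda>_. d"] card_nbhd_le by simp
  also have "\<dots> \<le> d ^ Suc n" using Suc by simp
  finally show ?case
    unfolding walks_Suc using \<open>finite ?A\<close> by (meson card_image_le finite_imageI le_trans)
qed

lemma sum_codeg_le: "(\<Sum>w \<in> V. codeg v w) \<le> d * d"
proof -
  have "(\<Sum>w \<in> V. codeg v w) = card (Sigma V (\<lambda>w. nbhd v \<inter> nbhd w))"
    using finite_V finite_nbhd by (simp add: card_SigmaI codeg_def)
  also have "Sigma V (\<lambda>w. nbhd v \<inter> nbhd w) = prod.swap ` Sigma (nbhd v) nbhd"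
    by (auto simp: nbhd_def image_iff E_sym)
  also have "card \<dots> = (\<Sum>u \<in> nbhd v. card (nbhd u))"
    using finite_nbhd by (simp add: card_image card_SigmaI)
  also have "\<dots> \<le> (\<Sum>u \<in> nbhd v. d)"
    by (rule sum_mono) (rule card_nbhd_le)
  also have "\<dots> \<le> d * d"
    using card_nbhd_le[of v] by simp
  finally show ?thesis .
qed

definition low_codeg :: "'a \<Rightarrow> 'a set" where
  "low_codeg v = {w \<in> V. w \<noteq> v \<and> real (codeg v w) < s}"

definition bad_extensions :: "'a set \<Rightarrow> 'a \<Rightarrow> (('a \<Rightarrow> nat) \<times> nat) set" where
  "bad_extensions S v = {(\<phi>, c). \<phi> \<in> colourings S \<and> c < L
     \<and> (\<forall>y \<in> S. E v y \<or> heavy v y \<longrightarrow> \<phi> y \<noteq> c) \<and> \<phi>(v := c) \<notin> colourings (insert v S)}"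

lemma card_colours_le:
  assumes S: "S \<subseteq> V" and \<phi>: "\<phi> \<in> colourings S"
  shows "L \<le> d + card {w \<in> V. heavy v w} + card {c. (\<phi>, c) \<in> bad_extensions S v}
           + card {c. c < L \<and> \<phi>(v := c) \<in> colourings (insert v S)}"
proof -
  let ?H = "{w \<in> V. heavy v w}"
  let ?bad = "{c. (\<phi>, c) \<in> bad_extensions S v}"
  let ?ext = "{c. c < L \<and> \<phi>(v := c) \<in> colourings (insert v S)}"
  have "?bad \<subseteq> {..<L}" by (auto simp: bad_extensions_def)
  then have fin: "finite ?bad" "finite ?ext" by (auto intro: finite_subset)
  have "{..<L} \<subseteq> \<phi> ` nbhd v \<union> \<phi> ` ?H \<union> ?bad \<union> ?ext"
    using \<phi> S by (auto simp: bad_extensions_def nbhd_def)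
  then have "card {..<L} \<le> card (\<phi> ` nbhd v \<union> \<phi> ` ?H \<union> ?bad \<union> ?ext)"
    by (rule card_mono[rotated]) (use fin finite_nbhd finite_V in auto)
  also have "\<dots> \<le> card (\<phi> ` nbhd v) + card (\<phi> ` ?H) + card ?bad + card ?ext"
    using card_Un_le by (meson add_le_mono le_refl le_trans)
  also have "\<dots> \<le> d + card ?H + card ?bad + card ?ext"
    using card_image_le[OF finite_nbhd, of \<phi> v] card_nbhd_le[of v] card_image_le[of ?H \<phi>] finite_V
    by simp
  finally show ?thesis by simp
qed

lemma card_extensions_le:
  assumes S: "S \<subseteq> V" and v: "v \<notin> S"
  shows "card (SIGMA \<phi>:colourings S. {c. c < L \<and> \<phi>(v := c) \<in> colourings (insert v S)})
           \<le> card (colourings (insert v S))"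
proof (rule card_inj_on_le)
  show "inj_on (\<lambda>(\<phi>, c). \<phi>(v := c)) (SIGMA \<phi>:colourings S. {c. c < L \<and> \<phi>(v := c) \<in> colourings (insert v S)})"
  proof (rule inj_onI, clarify)
    fix \<phi>1 c1 \<phi>2 c2 assume "\<phi>1 \<in> colourings S" "\<phi>2 \<in> colourings S" and eq: "\<phi>1(v := c1) = \<phi>2(v := c2)"
    then have "\<phi>1 v = \<phi>2 v" using v by (auto simp: colourings_def PiE_def extensional_def)
    with eq show "\<phi>1 = \<phi>2 \<and> c1 = c2" by (metis fun_upd_same fun_upd_triv fun_upd_upd)
  qed
  show "finite (colourings (insert v S))"
    using S finite_V finite_colourings finite_subset by (metis finite_insert)
qed auto

lemma card_colourings_times_L_le:
  assumes S: "S \<subseteq> V" and v: "v \<notin> S"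
  shows "L * card (colourings S) \<le> (d + card {w \<in> V. heavy v w}) * card (colourings S)
           + card (bad_extensions S v) + card (colourings (insert v S))"
proof -
  let ?C = "colourings S" and ?H = "{w \<in> V. heavy v w}"
  define bad where "bad \<phi> = {c. (\<phi>, c) \<in> bad_extensions S v}" for \<phi>
  define ext where "ext \<phi> = {c. c < L \<and> \<phi>(v := c) \<in> colourings (insert v S)}" for \<phi>
  have finite_C: "finite ?C" using S finite_V finite_colourings finite_subset by blast
  have "bad \<phi> \<subseteq> {..<L}" "ext \<phi> \<subseteq> {..<L}" for \<phi>
    by (auto simp: bad_def ext_def bad_extensions_def)
  then have fin: "finite (bad \<phi>)" "finite (ext \<phi>)" for \<phi>
    by (meson finite_lessThan finite_subset)+
  have "(\<Sum>\<phi> \<in> ?C. L) \<le> (\<Sum>\<phi> \<in> ?C. d + card ?H + card (bad \<phi>) + card (ext \<phi>))"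
    using card_colours_le[OF S] unfolding bad_def ext_def by (rule sum_mono)
  also have "\<dots> = (d + card ?H) * card ?C + card (Sigma ?C bad) + card (Sigma ?C ext)"
    using card_SigmaI[OF finite_C, of bad] card_SigmaI[OF finite_C, of ext] fin
    by (simp add: sum.distrib)
  also have "Sigma ?C bad = bad_extensions S v"
    by (auto simp: bad_def bad_extensions_def)
  also have "card (Sigma ?C ext) \<le> card (colourings (insert v S))"
    unfolding ext_def by (rule card_extensions_le[OF S v])
  finally show ?thesis by (simp add: mult.commute)
qed

lemma bad_extension_proper:
  assumes v: "v \<notin> S" and bad: "(\<phi>, c) \<in> bad_extensions S v"
  shows "proper_coloring (insert v S) E (\<phi>(v := c))"
    and "proper_coloring (insert v S) heavy (\<phi>(v := c))"
proof -
  from bad have "good S \<phi>" and avoid: "\<And>y. y \<in> S \<Longrightarrow> E v y \<or> heavy v y \<Longrightarrow> \<phi> y \<noteq> c"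
    by (auto simp: bad_extensions_def colourings_def)
  then show "proper_coloring (insert v S) E (\<phi>(v := c))"
    using v E_irrefl by (intro proper_coloring_fun_upd) (auto simp: good_def intro: sympI E_sym)
  show "proper_coloring (insert v S) heavy (\<phi>(v := c))"
    using \<open>good S \<phi>\<close> avoid v heavy_sym
    by (intro proper_coloring_fun_upd) (auto simp: good_def heavy_def)
qed

lemma bad_extension_bicoloured_cycle:
  assumes v: "v \<notin> S" and bad: "(\<phi>, c) \<in> bad_extensions S v"
  obtains cs a b where "is_cycle (insert v S) E cs" "v \<in> set cs" "\<phi>(v := c) ` set cs \<subseteq> {a, b}"
proof -
  from bad have \<phi>: "\<phi> \<in> S \<rightarrow>\<^sub>E {..<L}" "good S \<phi>" and "c < L"
    and not_ext: "\<phi>(v := c) \<notin> colourings (insert v S)"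
    by (auto simp: bad_extensions_def colourings_def)
  then have "\<phi>(v := c) \<in> insert v S \<rightarrow>\<^sub>E {..<L}" using v by (auto simp: PiE_iff extensional_def)
  then obtain cs a b where cycle: "is_cycle (insert v S) E cs" and bicol: "\<phi>(v := c) ` set cs \<subseteq> {a, b}"
    using not_ext bad_extension_proper[OF v bad] by (auto simp: colourings_def good_def)
  have "v \<in> set cs"
  proof (rule ccontr)
    assume "v \<notin> set cs"
    with cycle have "is_cycle S E cs" by (auto simp: is_cycle_def)
    moreover have "\<phi> ` set cs = \<phi>(v := c) ` set cs"
      using \<open>v \<notin> set cs\<close> by (intro image_cong[OF refl]) auto
    ultimately show False using \<phi>(2) bicol by (auto simp: good_def)
  qed
  with cycle bicol that show ?thesis by blast
qed

text \<open>The cycle through \<open>v\<close> with \<open>v\<close> removed; colouring \<open>v\<close> with \<open>c\<close> makes it bicoloured.\<close>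
definition closing_path :: "'a set \<Rightarrow> 'a \<Rightarrow> ('a \<Rightarrow> nat) \<Rightarrow> nat \<Rightarrow> 'a list \<Rightarrow> bool" where
  "closing_path S v \<phi> c p \<longleftrightarrow> odd (length p) \<and> 3 \<le> length p \<and> distinct p \<and> set p \<subseteq> S
     \<and> successively E (v # p @ [v]) \<and> (\<forall>i<length p. \<phi> (p ! i) = \<phi> (p ! (i mod 2)))
     \<and> \<phi> (p ! 1) = c \<and> (\<forall>i<length p. odd i \<longrightarrow> p ! i \<in> low_codeg v)"

lemma closing_pathD:
  assumes "closing_path S v \<phi> c p"
  shows "odd (length p)" "3 \<le> length p" "distinct p" "set p \<subseteq> S" "successively E (v # p @ [v])"
    "\<And>i. i < length p \<Longrightarrow> \<phi> (p ! i) = \<phi> (p ! (i mod 2))" "\<phi> (p ! 1) = c"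
    "\<And>i. i < length p \<Longrightarrow> odd i \<Longrightarrow> p ! i \<in> low_codeg v"
  using assms unfolding closing_path_def by blast+

lemma bad_extension_closing_path:
  assumes S: "S \<subseteq> V" and v: "v \<notin> S" and bad: "(\<phi>, c) \<in> bad_extensions S v"
  obtains p where "closing_path S v \<phi> c p"
proof -
  define \<psi> where "\<psi> = \<phi>(v := c)"
  from bad have avoid: "\<And>y. y \<in> S \<Longrightarrow> E v y \<or> heavy v y \<Longrightarrow> \<phi> y \<noteq> c"
    by (auto simp: bad_extensions_def)
  have \<psi>_S: "\<psi> x = \<phi> x" if "x \<in> S" for x using that v by (auto simp: \<psi>_def)
  obtain cs a b where cycle: "is_cycle (insert v S) E cs" and "v \<in> set cs" and "\<psi> ` set cs \<subseteq> {a, b}"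
    using bad_extension_bicoloured_cycle[OF v bad] unfolding \<psi>_def by blast
  then obtain p where p: "length p + 1 = length cs" "odd (length p)" "distinct p" "v \<notin> set p"
    "set p \<subseteq> insert v S" "successively E (v # p @ [v])"
    "\<forall>i<length p. \<psi> (p ! i) = \<psi> (p ! (i mod 2))" "\<psi> v = \<psi> (p ! 1)"
    using bicoloured_cycle_alternating_path[OF cycle _ bad_extension_proper(1)[OF v bad]]
    unfolding \<psi>_def by blast
  have pS: "set p \<subseteq> S" using p(4,5) by auto
  have "3 \<le> length p"
    using p(1,2) cycle by (auto simp: is_cycle_def elim!: oddE)
  have alt: "\<forall>i<length p. \<phi> (p ! i) = \<phi> (p ! (i mod 2))"
  proof (intro allI impI)
    fix i assume "i < length p"
    moreover have "i mod 2 < length p" using \<open>3 \<le> length p\<close> by linarith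
    ultimately show "\<phi> (p ! i) = \<phi> (p ! (i mod 2))"
      using p(7) pS \<psi>_S by (metis nth_mem subsetD)
  qed
  have "p ! 1 \<in> S" using pS nth_mem[of 1 p] \<open>3 \<le> length p\<close> by auto
  then have c1: "\<phi> (p ! 1) = c" using p(8) \<psi>_S[of "p ! 1"] by (simp add: \<psi>_def)
  have "p ! i \<in> low_codeg v" if "i < length p" "odd i" for i
  proof -
    have "\<phi> (p ! i) = \<phi> (p ! (i mod 2))" using alt that(1) by blast
    then have "\<phi> (p ! i) = c" using that(2) c1 by (simp add: odd_iff_mod_2_eq_one)
    moreover have "p ! i \<in> S" "p ! i \<noteq> v" using that pS p(4) by auto
    ultimately show ?thesis using avoid S by (force simp: low_codeg_def heavy_def)
  qed
  with p(2,3,6) pS \<open>3 \<le> length p\<close> alt c1 show ?thesis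
    using that unfolding closing_path_def by blast
qed

text \<open>A colour \<open>c\<close> that fails for \<open>v\<close> is witnessed by the bicoloured cycle it closes:
  a 4-cycle \<open>v x w y\<close> by \<open>w\<close> and the pair \<open>{x, y}\<close>, a longer cycle \<open>v # q @ [y]\<close> by the
  walk \<open>q\<close> and the vertex \<open>y\<close>. In both cases \<open>c\<close> is the colour of the second vertex.\<close>

definition short_cycle_witnesses :: "'a set \<Rightarrow> 'a \<Rightarrow> (('a \<Rightarrow> nat) \<times> nat) set" where
  "short_cycle_witnesses S v =
     (\<Union>w \<in> low_codeg v. \<Union>P \<in> {P. P \<subseteq> nbhd v \<inter> nbhd w \<and> card P = 2 \<and> P \<subseteq> S}.
        (\<lambda>\<phi>. (\<phi>, \<phi> w)) ` {\<phi> \<in> colourings S. \<forall>x \<in> P. \<forall>y \<in> P. \<phi> x = \<phi> y})"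

definition long_cycle_witnesses :: "'a set \<Rightarrow> 'a \<Rightarrow> (('a \<Rightarrow> nat) \<times> nat) set" where
  "long_cycle_witnesses S v =
     (\<Union>j < card S. \<Union>q \<in> {q \<in> walks v (2 * j + 4). real (codeg v (last q)) < s}.
        \<Union>y \<in> {y \<in> nbhd v \<inter> nbhd (last q). set (q @ [y]) \<subseteq> S \<and> distinct (q @ [y])}.
          (\<lambda>\<phi>. (\<phi>, \<phi> (q ! 1))) ` alternating_colourings S (q @ [y]))"

lemma closing_path_short_witness:
  assumes p: "closing_path S v \<phi> c p" "length p = 3" and \<phi>: "\<phi> \<in> colourings S"
  shows "(\<phi>, c) \<in> short_cycle_witnesses S v"
proof -
  obtain x w y where p_eq: "p = [x, w, y]"
    using p(2) by (auto simp: numeral_3_eq_3 length_Suc_conv)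
  have "w \<in> low_codeg v" using closing_pathD(8)[OF p(1), of 1] p_eq by simp
  moreover have "{x, y} \<subseteq> nbhd v \<inter> nbhd w" "card {x, y} = 2" "{x, y} \<subseteq> S"
    using closing_pathD(3-5)[OF p(1)] p_eq E_sym E_in_V by (auto simp: nbhd_def)
  moreover have "\<phi> y = \<phi> x" using closing_pathD(6)[OF p(1), of 2] p_eq by simp
  moreover have "\<phi> w = c" using closing_pathD(7)[OF p(1)] p_eq by simp
  ultimately show ?thesis
    unfolding short_cycle_witnesses_def using \<phi>
    by (intro UN_I[of w] UN_I[of "{x, y}"] image_eqI[where x = \<phi>]) auto
qed

lemma closing_path_long_witness:
  assumes S: "S \<subseteq> V" and p: "closing_path S v \<phi> c p" "length p = 2 * j + 5"
    and \<phi>: "\<phi> \<in> colourings S"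
  shows "(\<phi>, c) \<in> long_cycle_witnesses S v"
proof -
  note p_props = closing_pathD[OF p(1)]
  obtain q y where p_eq: "p = q @ [y]" and len_q: "length q = 2 * j + 4"
    using p(2) length_Suc_conv_rev[of p "2 * j + 4"] by auto
  then have "q \<noteq> []" by auto
  moreover have "length q - 1 = 2 * j + 3" using len_q by simp
  ultimately have "last q = q ! (2 * j + 3)" by (metis last_conv_nth)
  then have last_q: "last q = p ! (2 * j + 3)" using p_eq len_q by (simp add: nth_append)
  have "successively E ((v # q) @ [y, v])" using p_props(5) p_eq by simp
  then have walk: "successively E (v # q)" and edges: "E (last q) y" "E y v"
    using \<open>q \<noteq> []\<close> by (simp_all add: successively_append_iff del: append_Cons)
  have "real (codeg v (last q)) < s"
    using p_props(8)[of "2 * j + 3"] p(2) last_q by (simp add: low_codeg_def)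
  moreover have "q \<in> walks v (2 * j + 4)" using walk len_q by (simp add: walks_def)
  moreover have "y \<in> nbhd v \<inter> nbhd (last q)" using edges E_sym E_in_V by (auto simp: nbhd_def)
  moreover have "j < card S"
  proof -
    have "card (set p) \<le> card S" by (rule card_mono[OF finite_subset[OF S finite_V] p_props(4)])
    then show ?thesis using p(2) p_props(3) by (simp add: distinct_card)
  qed
  moreover have "\<phi> \<in> alternating_colourings S p"
    using \<phi> p_props(6) unfolding alternating_colourings_def by blast
  moreover have "c = \<phi> (q ! 1)" using p_props(7) p_eq len_q by (simp add: nth_append)
  ultimately show ?thesis
    unfolding long_cycle_witnesses_def using p_eq p_props(3,4)
    by (intro UN_I[of j] UN_I[of q] UN_I[of y] image_eqI[where x = \<phi>]) auto
qed

lemma bad_extensions_subset_witnesses: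
  assumes S: "S \<subseteq> V" and v: "v \<notin> S"
  shows "bad_extensions S v \<subseteq> short_cycle_witnesses S v \<union> long_cycle_witnesses S v"
proof
  fix z assume "z \<in> bad_extensions S v"
  then obtain \<phi> c where z: "z = (\<phi>, c)" and bad: "(\<phi>, c) \<in> bad_extensions S v"
    by (metis surj_pair)
  then have \<phi>: "\<phi> \<in> colourings S" by (simp add: bad_extensions_def)
  obtain p where p: "closing_path S v \<phi> c p"
    using bad_extension_closing_path[OF S v bad] .
  obtain k where k: "length p = 2 * k + 1" using closing_pathD(1)[OF p] oddE by blast
  show "z \<in> short_cycle_witnesses S v \<union> long_cycle_witnesses S v"
  proof (cases "k = 1")
    case True
    with closing_path_short_witness[OF p _ \<phi>] k z show ?thesis by simp
  next
    case False
    with k closing_pathD(2)[OF p] have "length p = 2 * (k - 2) + 5" by simp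
    with closing_path_long_witness[OF S p _ \<phi>] z show ?thesis by simp
  qed
qed

lemma card_pair_witnesses_le:
  assumes "deletion_bound S" "finite S" "P \<subseteq> S" "card P = 2"
  shows "real (card ((\<lambda>\<phi>. (\<phi>, \<phi> w)) ` {\<phi> \<in> colourings S. \<forall>x \<in> P. \<forall>y \<in> P. \<phi> x = \<phi> y}))
           \<le> real (card (colourings S)) / \<beta>"
proof -
  obtain x y where P: "P = {x, y}" "x \<noteq> y" using assms(4) by (auto simp: card_2_iff)
  then have X: "{\<phi> \<in> colourings S. \<forall>x \<in> P. \<forall>y \<in> P. \<phi> x = \<phi> y} = {\<phi> \<in> colourings S. \<phi> x = \<phi> y}"
    by auto
  have "card ((\<lambda>\<phi>. (\<phi>, \<phi> w)) ` {\<phi> \<in> colourings S. \<phi> x = \<phi> y}) \<le> card {\<phi> \<in> colourings S. \<phi> x = \<phi> y}"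
    using finite_colourings[OF assms(2)] by (intro card_image_le) simp
  moreover have "real (card {\<phi> \<in> colourings S. \<phi> x = \<phi> y}) * \<beta> \<le> real (card (colourings S))"
    using card_colourings_equal_pair[OF assms(1,2)] P assms(3) by auto
  ultimately show ?thesis
    unfolding X using \<beta>_pos by (simp add: pos_le_divide_eq) (meson mult_right_mono of_nat_mono
        order_trans less_imp_le)
qed

lemma card_alternating_witnesses_le:
  assumes "deletion_bound S" "finite S" "set p \<subseteq> S" "distinct p"
  shows "real (card ((\<lambda>\<phi>. (\<phi>, \<phi> u)) ` alternating_colourings S p))
           \<le> real (card (colourings S)) / \<beta> ^ (length p - 2)"
proof -
  have "card ((\<lambda>\<phi>. (\<phi>, \<phi> u)) ` alternating_colourings S p) \<le> card (alternating_colourings S p)"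
    using finite_colourings[OF assms(2)] by (intro card_image_le) (simp add: alternating_colourings_def)
  moreover have "0 < \<beta> ^ (length p - 2)" using \<beta>_pos by simp
  ultimately show ?thesis
    using card_alternating_colourings[OF assms] by (simp add: pos_le_divide_eq)
      (meson mult_right_mono of_nat_mono order_trans less_imp_le)
qed

lemma card_short_cycle_witnesses:
  assumes "deletion_bound S" "finite S"
  shows "real (card (short_cycle_witnesses S v))
           \<le> (\<Sum>w \<in> low_codeg v. real (codeg v w choose 2) / \<beta>) * real (card (colourings S))"
proof -
  let ?n = "real (card (colourings S))"
  let ?pairs = "\<lambda>w. {P. P \<subseteq> nbhd v \<inter> nbhd w \<and> card P = 2 \<and> P \<subseteq> S}"
  let ?Z = "\<lambda>w P. (\<lambda>\<phi>. (\<phi>, \<phi> w)) ` {\<phi> \<in> colourings S. \<forall>x \<in> P. \<forall>y \<in> P. \<phi> x = \<phi> y}"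
  have card_pairs: "finite (?pairs w) \<and> card (?pairs w) \<le> codeg v w choose 2" for w
  proof -
    have "?pairs w \<subseteq> {P. P \<subseteq> nbhd v \<inter> nbhd w \<and> card P = 2}" by blast
    moreover have "finite {P. P \<subseteq> nbhd v \<inter> nbhd w \<and> card P = 2}"
      using finite_nbhd by (simp add: finite_Collect_subsets)
    ultimately show ?thesis
      using n_subsets[of "nbhd v \<inter> nbhd w" 2] finite_nbhd
      by (metis (no_types, lifting) card_mono codeg_def finite_Int finite_subset)
  qed
  have "finite (low_codeg v)" using finite_V by (simp add: low_codeg_def)
  then have "real (card (short_cycle_witnesses S v))
               \<le> (\<Sum>w \<in> low_codeg v. real (card (\<Union>P \<in> ?pairs w. ?Z w P)))"
    unfolding short_cycle_witnesses_def by (rule real_card_UN_le)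
  also have "\<dots> \<le> (\<Sum>w \<in> low_codeg v. \<Sum>P \<in> ?pairs w. real (card (?Z w P)))"
    using card_pairs by (intro sum_mono real_card_UN_le) blast
  also have "\<dots> \<le> (\<Sum>w \<in> low_codeg v. \<Sum>P \<in> ?pairs w. ?n / \<beta>)"
    using card_pair_witnesses_le[OF assms] by (intro sum_mono) blast
  also have "\<dots> \<le> (\<Sum>w \<in> low_codeg v. real (codeg v w choose 2) * (?n / \<beta>))"
  proof (rule sum_mono)
    fix w
    have "real (card (?pairs w)) \<le> real (codeg v w choose 2)" using card_pairs by simp
    moreover have "0 \<le> ?n / \<beta>" using \<beta>_pos by simp
    ultimately show "(\<Sum>P \<in> ?pairs w. ?n / \<beta>) \<le> real (codeg v w choose 2) * (?n / \<beta>)"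
      unfolding sum_constant by (rule mult_right_mono)
  qed
  also have "\<dots> = (\<Sum>w \<in> low_codeg v. real (codeg v w choose 2) / \<beta>) * ?n"
    by (simp add: sum_distrib_right)
  finally show ?thesis .
qed

lemma card_filter_walks_le: "finite {q \<in> walks v n. P q} \<and> card {q \<in> walks v n. P q} \<le> d ^ n"
  using finite_walks_card_le[of v n] card_mono[of "walks v n" "{q \<in> walks v n. P q}"]
  by (auto intro: finite_subset)

lemma card_long_cycle_witnesses:
  assumes "deletion_bound S" "finite S"
  shows "real (card (long_cycle_witnesses S v))
           \<le> (\<Sum>j < card S. real d ^ (2 * j + 4) * s / \<beta> ^ (2 * j + 3)) * real (card (colourings S))"
proof -
  let ?n = "real (card (colourings S))"
  let ?Q = "\<lambda>j. {q \<in> walks v (2 * j + 4). real (codeg v (last q)) < s}"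
  let ?Y = "\<lambda>q. {y \<in> nbhd v \<inter> nbhd (last q). set (q @ [y]) \<subseteq> S \<and> distinct (q @ [y])}"
  let ?W = "\<lambda>q y. (\<lambda>\<phi>. (\<phi>, \<phi> (q ! 1))) ` alternating_colourings S (q @ [y])"
  have card_Y: "finite (?Y q) \<and> real (card (?Y q)) \<le> s" if "q \<in> ?Q j" for q j
  proof -
    have "?Y q \<subseteq> nbhd v \<inter> nbhd (last q)" by blast
    then have "finite (?Y q)" "card (?Y q) \<le> codeg v (last q)"
      using finite_nbhd by (auto simp: codeg_def intro: finite_subset card_mono)
    then show ?thesis using that by auto
  qed
  have card_W: "real (card (?W q y)) \<le> ?n / \<beta> ^ (2 * j + 3)" if "q \<in> ?Q j" "y \<in> ?Y q" for q y j
  proof -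
    have "length (q @ [y]) - 2 = 2 * j + 3" using that(1) by (simp add: walks_def)
    moreover have "set (q @ [y]) \<subseteq> S" "distinct (q @ [y])" using that(2) by auto
    ultimately show ?thesis using card_alternating_witnesses_le[OF assms, of "q @ [y]" "q ! 1"] by simp
  qed
  have "real (card (long_cycle_witnesses S v))
          \<le> (\<Sum>j < card S. \<Sum>q \<in> ?Q j. \<Sum>y \<in> ?Y q. real (card (?W q y)))"
    unfolding long_cycle_witnesses_def using card_filter_walks_le card_Y
    by (intro order_trans[OF real_card_UN_le] sum_mono order_trans[OF real_card_UN_le]
        real_card_UN_le) auto
  also have "\<dots> \<le> (\<Sum>j < card S. \<Sum>q \<in> ?Q j. s * (?n / \<beta> ^ (2 * j + 3)))"
  proof (intro sum_mono)
    fix j q assume q: "q \<in> ?Q j"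
    have "(\<Sum>y \<in> ?Y q. real (card (?W q y))) \<le> real (card (?Y q)) * (?n / \<beta> ^ (2 * j + 3))"
      using sum_mono[of "?Y q" _ "\<lambda>_. ?n / \<beta> ^ (2 * j + 3)"] card_W[OF q] by simp
    also have "\<dots> \<le> s * (?n / \<beta> ^ (2 * j + 3))"
      using card_Y[OF q] \<beta>_pos by (intro mult_right_mono) auto
    finally show "(\<Sum>y \<in> ?Y q. real (card (?W q y))) \<le> s * (?n / \<beta> ^ (2 * j + 3))" .
  qed
  also have "\<dots> \<le> (\<Sum>j < card S. real d ^ (2 * j + 4) * (s * (?n / \<beta> ^ (2 * j + 3))))"
  proof (rule sum_mono)
    fix j
    have "real (card (?Q j)) \<le> real d ^ (2 * j + 4)"
      using card_filter_walks_le by (simp flip: of_nat_power)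
    moreover have "0 \<le> s * (?n / \<beta> ^ (2 * j + 3))" using s_gt_1 \<beta>_pos by simp
    ultimately show "(\<Sum>q \<in> ?Q j. s * (?n / \<beta> ^ (2 * j + 3))) \<le> real d ^ (2 * j + 4) * (s * (?n / \<beta> ^ (2 * j + 3)))"
      unfolding sum_constant by (rule mult_right_mono)
  qed
  also have "\<dots> = (\<Sum>j < card S. real d ^ (2 * j + 4) * s / \<beta> ^ (2 * j + 3)) * ?n"
    by (simp add: sum_distrib_right mult.assoc)
  finally show ?thesis .
qed

lemma card_heavy_plus_low_codeg_le:
  "real (card {w \<in> V. heavy v w}) + (\<Sum>w \<in> low_codeg v. real (codeg v w choose 2) / \<beta>)
     \<le> (real d)\<^sup>2 / s"
proof -
  let ?H = "{w \<in> V. heavy v w}"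
  have "real (card ?H) \<le> (\<Sum>w \<in> ?H. real (codeg v w) / s)"
    using sum_mono[of ?H "\<lambda>_. 1" "\<lambda>w. real (codeg v w) / s"] s_gt_1
    by (simp add: heavy_def)
  moreover have "(\<Sum>w \<in> low_codeg v. real (codeg v w choose 2) / \<beta>)
                   \<le> (\<Sum>w \<in> low_codeg v. real (codeg v w) / s)"
  proof (rule sum_mono)
    fix w assume "w \<in> low_codeg v"
    then have k: "real (codeg v w) < s" by (simp add: low_codeg_def)
    have "real (codeg v w choose 2) / \<beta> = real (codeg v w) / s * ((real (codeg v w) - 1) / (s - 1))"
      using real_choose_two[of "codeg v w"] s_gt_1 by (simp add: \<beta>_eq field_simps)
    also have "\<dots> \<le> real (codeg v w) / s * 1"
      using k s_gt_1 by (intro mult_left_mono) auto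
    finally show "real (codeg v w choose 2) / \<beta> \<le> real (codeg v w) / s" by simp
  qed
  moreover have "(\<Sum>w \<in> ?H. real (codeg v w) / s) + (\<Sum>w \<in> low_codeg v. real (codeg v w) / s)
                   \<le> (\<Sum>w \<in> V. real (codeg v w) / s)"
    by (subst sum.union_disjoint[symmetric])
      (use finite_V s_gt_1 in \<open>auto simp: low_codeg_def heavy_def intro!: sum_mono2\<close>)
  moreover have "(\<Sum>w \<in> V. real (codeg v w) / s) \<le> (real d)\<^sup>2 / s"
    using sum_codeg_le[of v] s_gt_1
    by (simp add: power2_eq_square divide_right_mono flip: sum_divide_distrib of_nat_sum of_nat_mult)
  ultimately show ?thesis by linarith
qed

lemma long_cycle_series_le:
  "(\<Sum>j<n. real d ^ (2 * j + 4) * s / \<beta> ^ (2 * j + 3))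
     \<le> s * real d ^ 4 / (\<beta> * (\<beta>\<^sup>2 - (real d)\<^sup>2))"
proof -
  define r where "r = (real d)\<^sup>2 / \<beta>\<^sup>2"
  have r: "0 \<le> r" "r < 1"
    using d_less_\<beta> \<beta>_pos by (auto simp: r_def power_strict_mono)
  have "(\<Sum>j<n. real d ^ (2 * j + 4) * s / \<beta> ^ (2 * j + 3)) = s * real d ^ 4 / \<beta> ^ 3 * (\<Sum>j<n. r ^ j)"
  proof -
    have "(x ^ j)\<^sup>2 = (x\<^sup>2) ^ j" for x :: real and j
      by (simp flip: power_mult add: mult.commute)
    then show ?thesis
      by (simp add: sum_distrib_left r_def power_add power_mult power_divide field_simps)
  qed
  also have "\<dots> \<le> s * real d ^ 4 / \<beta> ^ 3 * (1 / (1 - r))"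
    using s_gt_1 \<beta>_pos by (intro mult_left_mono geometric_sum_le r) simp
  also have "\<dots> = s * real d ^ 4 / (\<beta> * (\<beta>\<^sup>2 - (real d)\<^sup>2))"
    using \<beta>_pos d_less_\<beta> r(2) by (simp add: r_def field_simps power2_eq_square power3_eq_cube)
  finally show ?thesis .
qed

lemma cycle_witnesses_subset:
  assumes S: "S \<subseteq> V"
  shows "short_cycle_witnesses S v \<union> long_cycle_witnesses S v
           \<subseteq> (\<lambda>(\<phi>, u). (\<phi>, \<phi> u)) ` (colourings S \<times> V)"
proof -
  have "short_cycle_witnesses S v \<subseteq> (\<lambda>(\<phi>, u). (\<phi>, \<phi> u)) ` (colourings S \<times> V)"
    unfolding short_cycle_witnesses_def
    by (auto simp: low_codeg_def intro!: rev_image_eqI[where x="(_, _)"])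
  moreover have "long_cycle_witnesses S v \<subseteq> (\<lambda>(\<phi>, u). (\<phi>, \<phi> u)) ` (colourings S \<times> V)"
  proof
    fix z assume "z \<in> long_cycle_witnesses S v"
    then obtain j q y \<phi> where z: "z = (\<phi>, \<phi> (q ! 1))" "\<phi> \<in> colourings S"
      and q: "q \<in> walks v (2 * j + 4)" "set (q @ [y]) \<subseteq> S"
      unfolding long_cycle_witnesses_def alternating_colourings_def by blast
    have "1 < length q" using q by (simp add: walks_def)
    then have "q ! 1 \<in> set (q @ [y])" by (simp add: nth_append)
    then have "q ! 1 \<in> V" using q S by blast
    with z show "z \<in> (\<lambda>(\<phi>, u). (\<phi>, \<phi> u)) ` (colourings S \<times> V)"
      by (auto intro: rev_image_eqI[of "(\<phi>, q ! 1)"])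
  qed
  ultimately show ?thesis by blast
qed

lemma card_bad_extensions_le:
  assumes S: "S \<subseteq> V" and v: "v \<notin> S"
  shows "card (bad_extensions S v) \<le> card (short_cycle_witnesses S v) + card (long_cycle_witnesses S v)"
proof -
  have "finite S" using S finite_V finite_subset by blast
  then have "finite (short_cycle_witnesses S v \<union> long_cycle_witnesses S v)"
    using cycle_witnesses_subset[OF S] finite_colourings finite_V
    by (meson finite_SigmaI finite_imageI finite_subset)
  then have "card (bad_extensions S v) \<le> card (short_cycle_witnesses S v \<union> long_cycle_witnesses S v)"
    using bad_extensions_subset_witnesses[OF S v] by (rule card_mono)
  also have "\<dots> \<le> card (short_cycle_witnesses S v) + card (long_cycle_witnesses S v)"
    by (rule card_Un_le)
  finally show ?thesis .
qed

lemma card_colourings_insert_ge: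
  assumes del: "deletion_bound S" and S: "S \<subseteq> V" and v: "v \<notin> S"
  shows "\<beta> * real (card (colourings S)) \<le> real (card (colourings (insert v S)))"
proof -
  let ?n = "real (card (colourings S))" and ?H = "real (card {w \<in> V. heavy v w})"
  define A where "A = (\<Sum>w \<in> low_codeg v. real (codeg v w choose 2) / \<beta>)"
  define B where "B = (\<Sum>j < card S. real d ^ (2 * j + 4) * s / \<beta> ^ (2 * j + 3))"
  have fin: "finite S" using S finite_V finite_subset by blast
  have "real (card (bad_extensions S v))
          \<le> real (card (short_cycle_witnesses S v)) + real (card (long_cycle_witnesses S v))"
    using card_bad_extensions_le[OF S v] by linarith
  also have "\<dots> \<le> (A + B) * ?n"
    using card_short_cycle_witnesses[OF del fin, of v] card_long_cycle_witnesses[OF del fin, of v]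
    by (simp add: A_def B_def distrib_right)
  finally have bad: "real (card (bad_extensions S v)) \<le> (A + B) * ?n" .
  have "real L * ?n \<le> (real d + ?H) * ?n + real (card (bad_extensions S v))
                        + real (card (colourings (insert v S)))"
    using of_nat_mono[where 'a=real, OF card_colourings_times_L_le[OF S v]] by simp
  moreover have "\<beta> \<le> real L - real d - ?H - A - B"
    using L_ge card_heavy_plus_low_codeg_le[of v] long_cycle_series_le[of "card S"]
    unfolding A_def B_def by linarith
  then have "\<beta> * ?n \<le> (real L - real d - ?H - A - B) * ?n"
    by (rule mult_right_mono) simp
  ultimately show ?thesis using bad by (simp add: algebra_simps)
qed

lemma deletion_bound_holds: "S \<subseteq> V \<Longrightarrow> deletion_bound S"
proof (induction "card S" arbitrary: S rule: less_induct)
  case less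
  have fin: "finite S" using less.prems finite_V finite_subset by blast
  show ?case unfolding deletion_bound_def
  proof (intro allI impI)
    fix T assume "T \<subseteq> S"
    then have "finite T" using fin finite_subset by blast
    then show "\<beta> ^ card T * real (card (colourings (S - T))) \<le> real (card (colourings S))"
      using \<open>T \<subseteq> S\<close>
    proof (induction T rule: finite_induct)
      case (insert x T)
      define S' where "S' = S - insert x T"
      have "card S' < card S" using insert.prems fin unfolding S'_def by (intro psubset_card_mono) auto
      then have "deletion_bound S'" using less S'_def by auto
      then have "\<beta> * real (card (colourings S')) \<le> real (card (colourings (insert x S')))"
        using less.prems by (intro card_colourings_insert_ge) (auto simp: S'_def)
      moreover have "insert x S' = S - T" using insert by (auto simp: S'_def)
      ultimately have "\<beta> ^ card T * (\<beta> * real (card (colourings S')))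
                         \<le> \<beta> ^ card T * real (card (colourings (S - T)))"
        using \<beta>_pos by (intro mult_left_mono) auto
      also have "\<dots> \<le> real (card (colourings S))" using insert by simp
      finally show ?case using insert.hyps by (simp add: S'_def mult.assoc mult.left_commute)
    qed simp
  qed
qed

lemma acyclic_chromatic_number_le: "acyclic_chromatic_number V E \<le> L"
proof -
  have "\<beta> ^ card V * real (card (colourings {})) \<le> real (card (colourings V))"
    using deletion_bound_holds[of V] unfolding deletion_bound_def by (metis Diff_cancel order_refl)
  moreover have "0 < \<beta> ^ card V" using \<beta>_pos by simp
  ultimately have "0 < real (card (colourings V))" by (simp add: colourings_empty)
  then obtain \<phi> where "\<phi> \<in> colourings V" by (metis card.empty ex_in_conv of_nat_0 less_irrefl)
  then have "acyclic_coloring V E L \<phi>"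
    by (auto simp: colourings_def good_def acyclic_coloring_def)
  then show ?thesis unfolding acyclic_chromatic_number_def by (blast intro: Least_le)
qed

end

section \<open>The choice of parameters\<close>

lemma degree_le_max_degree:
  assumes "simple_graph V E" "v \<in> V"
  shows "card {u \<in> V. E v u} \<le> max_degree V E"
proof -
  have "finite V" using assms(1) by (simp add: simple_graph_def)
  then show ?thesis unfolding max_degree_def degree_def using assms(2) by (intro Max_ge) auto
qed

lemma four_cube_less_square: "0 \<le> (x::real) \<Longrightarrow> 4 * x ^ 3 < ((x + 1) * (x + 2))\<^sup>2"
proof -
  assume "0 \<le> x"
  moreover have "((x + 1) * (x + 2))\<^sup>2 - 4 * x ^ 3 = x ^ 4 + 2 * x ^ 3 + 13 * x\<^sup>2 + 12 * x + 4"
    by (simp add: algebra_simps power2_eq_square power3_eq_cube power4_eq_xxxx)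
  ultimately show ?thesis
    by (smt (verit) zero_le_power)
qed

lemma colour_budget_bounds:
  fixes x D :: real
  assumes x: "0 < x" and D: "0 \<le> D" "D\<^sup>2 = x ^ 3"
  defines "\<beta> \<equiv> (x + 2) * (x + 2 - 1) / 2"
  shows "D < \<beta>"
    and "\<beta> + D + D\<^sup>2 / (x + 2) + (x + 2) * D ^ 4 / (\<beta> * (\<beta>\<^sup>2 - D\<^sup>2))
           \<le> 3/2 * x\<^sup>2 + 15/2 * x + 5 + D"
proof -
  have \<beta>: "\<beta> = (x + 1) * (x + 2) / 2" by (simp add: \<beta>_def algebra_simps)
  have \<beta>_pos: "0 < \<beta>" using x by (simp add: \<beta>)
  have "4 * D\<^sup>2 < ((x + 1) * (x + 2))\<^sup>2" using four_cube_less_square[of x] x D by simp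
  then have D2: "D\<^sup>2 < \<beta>\<^sup>2" by (simp add: \<beta> power_divide)
  then show "D < \<beta>" using D \<beta>_pos by (meson power_less_imp_less_base less_imp_le)
  have "D\<^sup>2 / (x + 2) = x\<^sup>2 - 2 * x + 4 - 8 / (x + 2)"
    using x D by (simp add: field_simps power2_eq_square power3_eq_cube)
  moreover have "0 \<le> 8 / (x + 2)" using x by simp
  moreover have "(x + 2) * D ^ 4 / (\<beta> * (\<beta>\<^sup>2 - D\<^sup>2)) \<le> 8 * x"
  proof -
    have "D ^ 4 = (D\<^sup>2)\<^sup>2" by (simp flip: power_mult)
    also have "\<dots> = x ^ 6" using D by (simp flip: power_mult)
    finally have "D ^ 4 = x ^ 6" .
    have "8 * x * (\<beta> * (\<beta>\<^sup>2 - D\<^sup>2)) - (x + 2) * D ^ 4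
            = x * (x + 2) * (3 * x ^ 4 + 15 * x ^ 3 + 25 * x\<^sup>2 + 16 * x + 4)"
      unfolding \<beta> D(2) \<open>D ^ 4 = x ^ 6\<close>
      by (simp add: algebra_simps power2_eq_square power3_eq_cube power4_eq_xxxx field_simps)
        (simp add: algebra_simps numeral_eq_Suc)
    moreover have "0 \<le> x * (x + 2) * (3 * x ^ 4 + 15 * x ^ 3 + 25 * x\<^sup>2 + 16 * x + 4)"
      using x by simp
    ultimately have "(x + 2) * D ^ 4 \<le> 8 * x * (\<beta> * (\<beta>\<^sup>2 - D\<^sup>2))" by linarith
    moreover have "0 < \<beta> * (\<beta>\<^sup>2 - D\<^sup>2)" using \<beta>_pos D2 by simp
    ultimately show ?thesis by (simp add: pos_divide_le_eq)
  qed
  moreover have "\<beta> = x\<^sup>2 / 2 + 3 * x / 2 + 1" by (simp add: \<beta> field_simps power2_eq_square)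
  ultimately show "\<beta> + D + D\<^sup>2 / (x + 2) + (x + 2) * D ^ 4 / (\<beta> * (\<beta>\<^sup>2 - D\<^sup>2))
           \<le> 3/2 * x\<^sup>2 + 15/2 * x + 5 + D" by linarith
qed

lemma budget_less_min:
  fixes t :: real assumes t: "2.8 < t"
  shows "3/2 * t ^ 4 + 15/2 * t\<^sup>2 + 6 + t ^ 3
           < min (3/2 * t ^ 4 + 5 * t ^ 3 - 14) (3/2 * t ^ 4 + t ^ 3 + 8 * t ^ 4 / (t\<^sup>2 - 4) + 1)"
proof -
  have "2.8 * 2.8 < t * t" using t by (intro mult_strict_mono) auto
  then have x: "7.84 < t\<^sup>2" by (simp add: power2_eq_square)
  have "2.8 * t\<^sup>2 < t * t\<^sup>2" using t x by (intro mult_strict_right_mono) auto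
  then have "15/2 * t\<^sup>2 + 20 < 4 * t ^ 3" using x by (simp add: power3_eq_cube power2_eq_square)
  moreover have "8 * t\<^sup>2 + 32 \<le> 8 * t ^ 4 / (t\<^sup>2 - 4)"
  proof -
    have "(8 * t\<^sup>2 + 32) * (t\<^sup>2 - 4) \<le> 8 * (t\<^sup>2)\<^sup>2" by (simp add: algebra_simps power2_eq_square)
    then show ?thesis using x by (simp add: pos_le_divide_eq power_mult flip: power_mult_distrib)
  qed
  ultimately show ?thesis using x by simp
qed

lemma acyclic_chromatic_number_less_budget:
  fixes x :: real
  assumes G: "simple_graph V E" and x: "0 < x" "(real (max_degree V E))\<^sup>2 = x ^ 3"
  shows "real (acyclic_chromatic_number V E) < 3/2 * x\<^sup>2 + 15/2 * x + 6 + real (max_degree V E)"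
proof -
  define D where "D = real (max_degree V E)"
  define \<beta> where "\<beta> = (x + 2) * (x + 2 - 1) / 2"
  define budget where "budget = \<beta> + D + D\<^sup>2 / (x + 2) + (x + 2) * D ^ 4 / (\<beta> * (\<beta>\<^sup>2 - D\<^sup>2))"
  note bounds = colour_budget_bounds[OF x(1) _ x(2)[folded D_def], folded \<beta>_def budget_def]
  interpret acyclic_counting V E "max_degree V E" "nat \<lceil>budget\<rceil>" "x + 2" \<beta>
    using G degree_le_max_degree bounds(1) x(1)
    by unfold_locales (auto simp: \<beta>_def budget_def D_def)
  have "0 < \<beta>\<^sup>2 - D\<^sup>2" using bounds(1) by (simp add: D_def power_strict_mono)
  then have "0 \<le> budget"
    unfolding budget_def using bounds(1) x(1) by (simp add: D_def zero_le_divide_iff)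
  have "real (acyclic_chromatic_number V E) \<le> real (nat \<lceil>budget\<rceil>)"
    using acyclic_chromatic_number_le by simp
  also have "\<dots> < budget + 1"
    using \<open>0 \<le> budget\<close> by linarith
  also have "\<dots> \<le> 3/2 * x\<^sup>2 + 15/2 * x + 6 + D"
    using bounds(2) by (simp add: D_def)
  finally show ?thesis by (simp add: D_def)
qed

theorem theorem1:
  fixes V :: "'a set" and E :: "'a \<Rightarrow> 'a \<Rightarrow> bool"
  assumes "simple_graph V E"
    and "V \<noteq> {}"
    and "max_degree V E \<ge> 24"
  shows "real (acyclic_chromatic_number V E) <
    min (3/2 * real (max_degree V E) powr (4/3) + 5 * real (max_degree V E) - 14)
        (3/2 * real (max_degree V E) powr (4/3) + real (max_degree V E)
          + 8 * real (max_degree V E) powr (4/3) / (real (max_degree V E) powr (2/3) - 4) + 1)"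
proof -
  define D where "D = real (max_degree V E)"
  define t where "t = D powr (1/3)"
  have "24 \<le> D" using assms(3) by (simp add: D_def)
  then have powr_t: "D powr (n / 3) = t ^ n" for n :: nat
    by (simp add: t_def powr_powr flip: powr_realpow)
  then have D_eq: "D = t ^ 3" using powr_t[of 3] \<open>24 \<le> D\<close> by simp
  have "2.8 < t"
  proof (rule ccontr)
    assume "\<not> 2.8 < t"
    then have "t ^ 3 \<le> 2.8 ^ 3" by (intro power_mono) (auto simp: t_def)
    with D_eq \<open>24 \<le> D\<close> show False by (simp add: power3_eq_cube)
  qed
  have "real (acyclic_chromatic_number V E) < 3/2 * (t\<^sup>2)\<^sup>2 + 15/2 * t\<^sup>2 + 6 + D"
    using acyclic_chromatic_number_less_budget[OF assms(1), of "t\<^sup>2"] \<open>2.8 < t\<close> D_eq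
    by (simp add: D_def flip: power_mult)
  also have "\<dots> < min (3/2 * t ^ 4 + 5 * t ^ 3 - 14) (3/2 * t ^ 4 + t ^ 3 + 8 * t ^ 4 / (t\<^sup>2 - 4) + 1)"
    using budget_less_min[OF \<open>2.8 < t\<close>] D_eq by (simp flip: power_mult)
  finally show ?thesis
    using powr_t[of 4] powr_t[of 2] D_eq by (simp add: D_def)
qed

end
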